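(* Let $\psi:(0,1]\to(0,\infty)$ with $\psi(1)=1$, $\lim_{r\to0+}\psi(r)=0$ and $I_\psi\subset(k,k+1)$ for some positive integer $k$. Then there exists $c_1=c_1(d,k,\psi)>0$ such that $\|fg\|_{C^\psi}\le c_1\|f\|_{C^\psi}\|g\|_{C^\psi}$ for all $f,g\in C^\psi(\mathbb{R}^d)$.
   Context: $g:(0,1]\to(0,\infty)$ is almost increasing if $c\,g(r)\le g(R)$ for some $c\in(0,1]$ and all $0<r\le R\le1$, almost decreasing if $g(R)\le Cg(r)$ for some $C\ge1$ and all $0<r\le R\le1$. $M_\psi=\inf\{\alpha: \psi(r)/r^\alpha\text{ almost decreasing}\}$, $m_\psi=\sup\{\alpha: \psi(r)/r^\alpha\text{ almost increasing}\}$, $I_\psi=[m_\psi,M_\psi]$. $\|f\|_{C^0}=\sup|f|$, $\|D^jf\|_{C^0}=\max_{|\gamma|=j}\|D^\gamma f\|_{C^0}$; $[f]_{C^{-k;\psi}}=\sup_x\sup_{0<|h|\le1}\frac{|f(x+h)-f(x)|}{\psi(|h|)|h|^{-k}}$. If $m_\psi\in(k,k+1]$, $C^\psi(\mathbb{R}^d)$ is the set of continuous $f$ with $D^\gamma f$ bounded continuous for $|\gamma|\le k$ and $[D^\gamma f]_{C^{-k;\psi}}<\infty$ for $|\gamma|=k$, with norm $\|f\|_{C^\psi}=\sum_{j=0}^k\|D^jf\|_{C^0}+\max_{|\gamma|=k}[D^\gamma f]_{C^{-k;\psi}}$. *)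

theory Defs
  imports "HOL-Analysis.Analysis"
begin

definition almost_increasing :: "(real \<Rightarrow> real) \<Rightarrow> bool" where
  "almost_increasing g \<longleftrightarrow>
     (\<exists>c. 0 < c \<and> c \<le> 1 \<and> (\<forall>r R. 0 < r \<and> r \<le> R \<and> R \<le> 1 \<longrightarrow> c * g r \<le> g R))"

definition almost_decreasing :: "(real \<Rightarrow> real) \<Rightarrow> bool" where
  "almost_decreasing g \<longleftrightarrow>
     (\<exists>C. 1 \<le> C \<and> (\<forall>r R. 0 < r \<and> r \<le> R \<and> R \<le> 1 \<longrightarrow> g R \<le> C * g r))"

text \<open>Upper and lower Matuszewska-type indices (extended reals, so that
  the infimum/supremum of an empty set is +/- infinity).\<close>
definition M_idx :: "(real \<Rightarrow> real) \<Rightarrow> ereal" where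
  "M_idx \<psi> = Inf (ereal ` {\<alpha>. almost_decreasing (\<lambda>r. \<psi> r / r powr \<alpha>)})"

definition m_idx :: "(real \<Rightarrow> real) \<Rightarrow> ereal" where
  "m_idx \<psi> = Sup (ereal ` {\<alpha>. almost_increasing (\<lambda>r. \<psi> r / r powr \<alpha>)})"

definition I_idx :: "(real \<Rightarrow> real) \<Rightarrow> ereal set" where
  "I_idx \<psi> = {m_idx \<psi> .. M_idx \<psi>}"

fun dpar :: "'a::euclidean_space list \<Rightarrow> ('a \<Rightarrow> real) \<Rightarrow> 'a \<Rightarrow> real" where
  "dpar [] f = f"
| "dpar (b # bs) f = (\<lambda>x. deriv (\<lambda>t. dpar bs f (x + t *\<^sub>R b)) 0)"

definition dirs :: "nat \<Rightarrow> 'a::euclidean_space list set" where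
  "dirs j = {bs. set bs \<subseteq> Basis \<and> length bs = j}"

definition hol_quot :: "(real \<Rightarrow> real) \<Rightarrow> nat \<Rightarrow> ('a::euclidean_space \<Rightarrow> real) \<Rightarrow> real set" where
  "hol_quot \<psi> k F = {\<bar>F (x + h) - F x\<bar> / (\<psi> (norm h) * norm h powr (- real k)) | x h. 0 < norm h \<and> norm h \<le> 1}"

definition seminorm_psi :: "(real \<Rightarrow> real) \<Rightarrow> nat \<Rightarrow> ('a::euclidean_space \<Rightarrow> real) \<Rightarrow> real" where
  "seminorm_psi \<psi> k F = Sup (hol_quot \<psi> k F)"

definition Cpsi :: "(real \<Rightarrow> real) \<Rightarrow> nat \<Rightarrow> ('a::euclidean_space \<Rightarrow> real) set" where
  "Cpsi \<psi> k = {f.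
     (\<forall>j<k. \<forall>bs\<in>dirs j. \<forall>b\<in>Basis. \<forall>x.
         (\<lambda>t. dpar bs f (x + t *\<^sub>R b)) differentiable (at 0)) \<and>
     (\<forall>j\<le>k. \<forall>bs\<in>dirs j. continuous_on UNIV (dpar bs f) \<and> bounded (range (dpar bs f))) \<and>
     (\<forall>bs\<in>dirs k. bdd_above (hol_quot \<psi> k (dpar bs f)))}"

definition C0norm_j :: "nat \<Rightarrow> ('a::euclidean_space \<Rightarrow> real) \<Rightarrow> real" where
  "C0norm_j j f = Sup {\<bar>dpar bs f x\<bar> | bs x. bs \<in> dirs j}"

definition norm_Cpsi :: "(real \<Rightarrow> real) \<Rightarrow> nat \<Rightarrow> ('a::euclidean_space \<Rightarrow> real) \<Rightarrow> real" where
  "norm_Cpsi \<psi> k f = (\<Sum>j\<le>k. C0norm_j j f) + Max ((\<lambda>bs. seminorm_psi \<psi> k (dpar bs f)) ` dirs k)"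

end

theory Submission
  imports Defs
begin

text \<open>By the Leibniz rule, every derivative of order j \<le> k of f g is a sum of 2^j
  products of derivatives of f and g of complementary orders; this gives the sup-norm
  bounds at once. For the \<psi>-H\<ouml>lder seminorm of the order-k derivatives we write
  u' v' - u v = (u' - u) v' + u (v' - v), so every derivative of order \<le> k needs a
  modulus of continuity of the form \<psi>(|h|) |h|^-k. For order k this is the seminorm itself;
  lower-order derivatives are Lipschitz with constant d \<parallel>f\<parallel>, and M_\<psi> < k + 1 gives
  r^(k+1) \<le> K \<psi>(r), i.e. r \<le> K \<psi>(r) r^-k on (0,1].\<close>

lemma abs_sum_list_le_length_mult:
  fixes F :: "'b \<Rightarrow> real"
  assumes "\<And>z. z \<in> set xs \<Longrightarrow> \<bar>F z\<bar> \<le> B"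
  shows "\<bar>\<Sum>z\<leftarrow>xs. F z\<bar> \<le> real (length xs) * B"
proof -
  have "\<bar>\<Sum>z\<leftarrow>xs. F z\<bar> \<le> (\<Sum>z\<leftarrow>xs. \<bar>F z\<bar>)"
    using sum_list_abs[of "map F xs"] by (simp add: comp_def)
  also have "\<dots> \<le> (\<Sum>z\<leftarrow>xs. B)"
    using assms by (rule sum_list_mono)
  finally show ?thesis by (simp add: sum_list_triv)
qed

lemma abs_mult_diff_le:
  fixes u u' v v' :: real
  assumes "\<bar>u' - u\<bar> \<le> a" "\<bar>v'\<bar> \<le> b" "\<bar>u\<bar> \<le> c" "\<bar>v' - v\<bar> \<le> e"
  shows "\<bar>u' * v' - u * v\<bar> \<le> a * b + c * e"
proof -
  have "\<bar>u' * v' - u * v\<bar> = \<bar>(u' - u) * v' + u * (v' - v)\<bar>"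
    by (simp add: algebra_simps)
  also have "\<dots> \<le> \<bar>u' - u\<bar> * \<bar>v'\<bar> + \<bar>u\<bar> * \<bar>v' - v\<bar>"
    by (metis abs_mult abs_triangle_ineq)
  also have "\<dots> \<le> a * b + c * e"
    using assms by (intro add_mono mult_mono) auto
  finally show ?thesis .
qed

lemma abs_diff_le_of_deriv_bound:
  fixes \<phi> :: "real \<Rightarrow> real"
  assumes "\<And>t. (\<phi> has_real_derivative \<phi>' t) (at t)" "\<And>t. \<bar>\<phi>' t\<bar> \<le> B"
  shows "\<bar>\<phi> a - \<phi> b\<bar> \<le> B * \<bar>a - b\<bar>"
  using field_differentiable_bound[of UNIV \<phi> \<phi>' B a b] assms by simp

lemma has_real_derivative_along_line:
  fixes u :: "'a::real_normed_vector \<Rightarrow> real"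
  assumes "(\<lambda>s. u (y + t *\<^sub>R b + s *\<^sub>R b)) differentiable (at 0)"
  shows "((\<lambda>s. u (y + s *\<^sub>R b)) has_real_derivative deriv (\<lambda>s. u (y + t *\<^sub>R b + s *\<^sub>R b)) 0) (at t)"
proof -
  have "(\<lambda>s. u (y + t *\<^sub>R b + s *\<^sub>R b)) = (\<lambda>s. u (y + (s + t) *\<^sub>R b))"
    by (simp add: scaleR_add_left algebra_simps)
  with assms show ?thesis
    using DERIV_shift[of "\<lambda>s. u (y + s *\<^sub>R b)" _ 0 t]
    by (simp add: DERIV_deriv_iff_real_differentiable[symmetric])
qed

lemma abs_diff_le_of_partial_deriv_bound:
  fixes u :: "'a::euclidean_space \<Rightarrow> real"
  assumes diff: "\<And>y b. b \<in> Basis \<Longrightarrow> (\<lambda>t. u (y + t *\<^sub>R b)) differentiable (at 0)"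
    and bound: "\<And>y b. b \<in> Basis \<Longrightarrow> \<bar>deriv (\<lambda>t. u (y + t *\<^sub>R b)) 0\<bar> \<le> B"
  shows "\<bar>u (x + h) - u x\<bar> \<le> real DIM('a) * B * norm h"
proof -
  have along_basis: "\<bar>u (y + (h \<bullet> b) *\<^sub>R b) - u y\<bar> \<le> B * norm h" if b: "b \<in> Basis" for y b
  proof -
    have "\<bar>(\<lambda>t. u (y + t *\<^sub>R b)) (h \<bullet> b) - (\<lambda>t. u (y + t *\<^sub>R b)) 0\<bar> \<le> B * \<bar>h \<bullet> b - 0\<bar>"
    proof (rule abs_diff_le_of_deriv_bound)
      fix t
      have "(\<lambda>s. u (y + t *\<^sub>R b + s *\<^sub>R b)) differentiable (at 0)"
        using diff[OF b, of "y + t *\<^sub>R b"] .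
      then show "((\<lambda>t. u (y + t *\<^sub>R b)) has_real_derivative deriv (\<lambda>s. u (y + t *\<^sub>R b + s *\<^sub>R b)) 0) (at t)"
        by (rule has_real_derivative_along_line)
      show "\<bar>deriv (\<lambda>s. u (y + t *\<^sub>R b + s *\<^sub>R b)) 0\<bar> \<le> B"
        using bound[OF b] .
    qed
    moreover have "B * \<bar>h \<bullet> b\<bar> \<le> B * norm h"
      using bound[OF b, of y] Basis_le_norm[OF b, of h] by (intro mult_left_mono) auto
    ultimately show ?thesis by simp
  qed
  have "\<bar>u (x + (\<Sum>b\<in>S. (h \<bullet> b) *\<^sub>R b)) - u x\<bar> \<le> real (card S) * B * norm h"
    if "finite S" "S \<subseteq> Basis" for S
    using that
  proof (induction S arbitrary: x rule: finite_induct)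
    case (insert b S)
    let ?y = "x + (\<Sum>b\<in>S. (h \<bullet> b) *\<^sub>R b)"
    have "\<bar>u (?y + (h \<bullet> b) *\<^sub>R b) - u ?y\<bar> \<le> B * norm h"
      using along_basis insert.prems by simp
    moreover have "\<bar>u ?y - u x\<bar> \<le> real (card S) * B * norm h"
      using insert by simp
    ultimately show ?case
      using insert.hyps by (simp add: algebra_simps)
  qed simp
  from this[of Basis] show ?thesis
    by (simp add: euclidean_representation)
qed

fun leibniz_splits :: "'a list \<Rightarrow> ('a list \<times> 'a list) list" where
  "leibniz_splits [] = [([], [])]"
| "leibniz_splits (b # bs) = concat (map (\<lambda>(p, q). [(b # p, q), (p, b # q)]) (leibniz_splits bs))"

lemma length_leibniz_splits: "length (leibniz_splits bs) = 2 ^ length bs"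
proof -
  have "length (concat (map (\<lambda>(p, q). [(b # p, q), (p, b # q)]) L)) = 2 * length L"
    for b :: 'a and L :: "('a list \<times> 'a list) list"
    by (induction L) auto
  then show ?thesis by (induction bs) simp_all
qed

lemma leibniz_splits_subset:
  "(p, q) \<in> set (leibniz_splits bs) \<Longrightarrow>
     length p + length q = length bs \<and> set p \<subseteq> set bs \<and> set q \<subseteq> set bs"
  by (induction bs arbitrary: p q) fastforce+

lemma sum_list_leibniz_splits_Cons:
  "sum_list (map F (leibniz_splits (b # bs))) =
     sum_list (map (\<lambda>(p, q). F (b # p, q) + F (p, b # q)) (leibniz_splits bs))"
proof -
  have "sum_list (map F (concat (map (\<lambda>(p, q). [(b # p, q), (p, b # q)]) L))) =
        sum_list (map (\<lambda>(p, q). F (b # p, q) + F (p, b # q)) L)" for L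
    by (induction L) auto
  then show ?thesis by simp
qed

lemma has_real_derivative_sum_list_mult:
  assumes "\<And>z. z \<in> set L \<Longrightarrow> (U z has_real_derivative U' z) (at 0) \<and> (V z has_real_derivative V' z) (at 0)"
  shows "((\<lambda>t. \<Sum>z\<leftarrow>L. U z t * V z t) has_real_derivative (\<Sum>z\<leftarrow>L. U' z * V z 0 + U z 0 * V' z)) (at 0)"
  using assms by (induction L) (auto intro!: derivative_eq_intros)

lemma dpar_mult:
  fixes f g :: "'a::euclidean_space \<Rightarrow> real"
  assumes diff_f: "\<And>p b x. set p \<subseteq> Basis \<Longrightarrow> length p < n \<Longrightarrow> b \<in> Basis \<Longrightarrow>
        (\<lambda>t. dpar p f (x + t *\<^sub>R b)) differentiable (at 0)"
    and diff_g: "\<And>q b x. set q \<subseteq> Basis \<Longrightarrow> length q < n \<Longrightarrow> b \<in> Basis \<Longrightarrow>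
        (\<lambda>t. dpar q g (x + t *\<^sub>R b)) differentiable (at 0)"
    and "set bs \<subseteq> Basis" "length bs \<le> n"
  shows "dpar bs (\<lambda>x. f x * g x) = (\<lambda>x. \<Sum>(p, q)\<leftarrow>leibniz_splits bs. dpar p f x * dpar q g x)"
  using assms(3,4)
proof (induction bs)
  case (Cons b bs)
  show ?case
  proof
    fix x
    let ?U = "\<lambda>z t. dpar (fst z) f (x + t *\<^sub>R b)"
    let ?V = "\<lambda>z t. dpar (snd z) g (x + t *\<^sub>R b)"
    have "((\<lambda>t. \<Sum>z\<leftarrow>leibniz_splits bs. ?U z t * ?V z t) has_real_derivative
        (\<Sum>z\<leftarrow>leibniz_splits bs. deriv (?U z) 0 * ?V z 0 + ?U z 0 * deriv (?V z) 0)) (at 0)"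
    proof (rule has_real_derivative_sum_list_mult)
      fix z assume "z \<in> set (leibniz_splits bs)"
      then have "length (fst z) < n" "length (snd z) < n" "set (fst z) \<subseteq> Basis" "set (snd z) \<subseteq> Basis"
        using leibniz_splits_subset[of "fst z" "snd z" bs] Cons.prems by auto
      then show "(?U z has_real_derivative deriv (?U z) 0) (at 0) \<and> (?V z has_real_derivative deriv (?V z) 0) (at 0)"
        using diff_f diff_g Cons.prems by (simp add: DERIV_deriv_iff_real_differentiable)
    qed
    then have "dpar (b # bs) (\<lambda>x. f x * g x) x =
        (\<Sum>z\<leftarrow>leibniz_splits bs. deriv (?U z) 0 * ?V z 0 + ?U z 0 * deriv (?V z) 0)"
      using Cons by (simp add: DERIV_imp_deriv split_def)
    then show "dpar (b # bs) (\<lambda>x. f x * g x) x =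
        (\<Sum>(p, q)\<leftarrow>leibniz_splits (b # bs). dpar p f x * dpar q g x)"
      unfolding sum_list_leibniz_splits_Cons by (simp add: split_def)
  qed
qed simp

lemma finite_dirs: "finite (dirs j :: 'a::euclidean_space list set)"
  unfolding dirs_def using finite_lists_length_eq[OF finite_Basis] .

lemma dirs_nonempty: "dirs j \<noteq> ({} :: 'a::euclidean_space list set)"
proof -
  obtain b :: 'a where "b \<in> Basis" using nonempty_Basis by blast
  then have "replicate j b \<in> dirs j" unfolding dirs_def by auto
  then show ?thesis by blast
qed

lemma leibniz_splits_dirs:
  assumes "(p, q) \<in> set (leibniz_splits bs)" "bs \<in> dirs j"
  shows "p \<in> dirs (length p)" "q \<in> dirs (length q)" "length p \<le> j" "length q \<le> j"
  using leibniz_splits_subset[OF assms(1)] assms(2) unfolding dirs_def by auto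

lemma abs_dpar_le_C0norm_j:
  assumes f: "f \<in> Cpsi \<psi> k" and bs: "bs \<in> dirs j" and j: "j \<le> k"
  shows "\<bar>dpar bs f x\<bar> \<le> C0norm_j j f"
proof -
  have "bdd_above (range (\<lambda>x. \<bar>dpar bs f x\<bar>))" if "bs \<in> dirs j" for bs
  proof -
    have "bounded (range (dpar bs f))" using f that j unfolding Cpsi_def by auto
    then show ?thesis
      unfolding bounded_iff bdd_above_def by (auto simp: real_norm_def)
  qed
  then have "bdd_above (\<Union>bs\<in>dirs j. range (\<lambda>x. \<bar>dpar bs f x\<bar>))"
    by (simp add: bdd_above_UN[OF finite_dirs])
  moreover have "{\<bar>dpar bs f x\<bar> | bs x. bs \<in> dirs j} = (\<Union>bs\<in>dirs j. range (\<lambda>x. \<bar>dpar bs f x\<bar>))"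
    by auto
  ultimately show ?thesis
    unfolding C0norm_j_def using bs by (auto intro!: cSup_upper)
qed

lemma hol_quot_nonempty: "hol_quot \<psi> k (F :: 'a::euclidean_space \<Rightarrow> real) \<noteq> {}"
proof -
  obtain b :: 'a where "b \<in> Basis" using nonempty_Basis by blast
  then have "\<bar>F (0 + b) - F 0\<bar> / (\<psi> (norm b) * norm b powr - real k) \<in> hol_quot \<psi> k F"
    unfolding hol_quot_def by (intro CollectI exI[of _ 0] exI[of _ b]) simp
  then show ?thesis by blast
qed

lemma hol_quot_nonneg:
  assumes "\<forall>r. 0 < r \<and> r \<le> 1 \<longrightarrow> 0 < \<psi> r" and "y \<in> hol_quot \<psi> k F"
  shows "0 \<le> y"
  using assms unfolding hol_quot_def by (auto intro!: divide_nonneg_pos)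

lemma hol_quot_le_seminorm_psi:
  assumes "f \<in> Cpsi \<psi> k" "bs \<in> dirs k" "y \<in> hol_quot \<psi> k (dpar bs f)"
  shows "y \<le> seminorm_psi \<psi> k (dpar bs f)"
  using assms unfolding seminorm_psi_def Cpsi_def by (auto intro: cSup_upper)

lemma norm_Cpsi_ge:
  assumes pos: "\<forall>r. 0 < r \<and> r \<le> 1 \<longrightarrow> 0 < \<psi> r" and f: "f \<in> Cpsi \<psi> k"
  shows C0norm_j_le_norm_Cpsi: "j \<le> k \<Longrightarrow> C0norm_j j f \<le> norm_Cpsi \<psi> k f"
    and seminorm_psi_le_norm_Cpsi: "bs \<in> dirs k \<Longrightarrow> seminorm_psi \<psi> k (dpar bs f) \<le> norm_Cpsi \<psi> k f"
    and norm_Cpsi_nonneg: "0 \<le> norm_Cpsi \<psi> k f"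
proof -
  let ?S = "(\<lambda>bs. seminorm_psi \<psi> k (dpar bs f)) ` (dirs k :: 'a list set)"
  have semi_le_Max: "seminorm_psi \<psi> k (dpar bs f) \<le> Max ?S" if "bs \<in> dirs k" for bs
    using finite_dirs that by (intro Max_ge) auto
  have "0 \<le> seminorm_psi \<psi> k (dpar bs f)" if "bs \<in> dirs k" for bs
  proof -
    obtain y where "y \<in> hol_quot \<psi> k (dpar bs f)" using hol_quot_nonempty by blast
    then show ?thesis
      using hol_quot_nonneg[OF pos] hol_quot_le_seminorm_psi[OF f that] by fastforce
  qed
  then have Max_nonneg: "0 \<le> Max ?S"
    using dirs_nonempty semi_le_Max by (metis all_not_in_conv order_trans)
  have C0_nonneg: "0 \<le> C0norm_j j f" if "j \<le> k" for j
  proof -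
    obtain bs where "bs \<in> (dirs j :: 'a list set)" using dirs_nonempty by blast
    then show ?thesis using abs_dpar_le_C0norm_j[OF f _ that, of bs 0] by linarith
  qed
  have sum_ge: "C0norm_j j f \<le> (\<Sum>j\<le>k. C0norm_j j f)" if "j \<le> k" for j
    using that C0_nonneg by (intro member_le_sum) auto
  show "0 \<le> norm_Cpsi \<psi> k f"
    unfolding norm_Cpsi_def using sum_ge[of 0] C0_nonneg[of 0] Max_nonneg by linarith
  show "j \<le> k \<Longrightarrow> C0norm_j j f \<le> norm_Cpsi \<psi> k f"
    unfolding norm_Cpsi_def using sum_ge Max_nonneg by fastforce
  show "bs \<in> dirs k \<Longrightarrow> seminorm_psi \<psi> k (dpar bs f) \<le> norm_Cpsi \<psi> k f"
    unfolding norm_Cpsi_def using semi_le_Max sum_ge[of 0] C0_nonneg[of 0] by fastforce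
qed

lemma abs_dpar_le_norm_Cpsi:
  assumes "\<forall>r. 0 < r \<and> r \<le> 1 \<longrightarrow> 0 < \<psi> r" "f \<in> Cpsi \<psi> k" "p \<in> dirs j" "j \<le> k"
  shows "\<bar>dpar p f x\<bar> \<le> norm_Cpsi \<psi> k f"
  using abs_dpar_le_C0norm_j[OF assms(2-4)] C0norm_j_le_norm_Cpsi[OF assms(1,2,4)] by (rule order_trans)

lemma almost_increasing_almost_decreasing_exponent_le:
  assumes psi1: "0 < \<psi> 1"
    and inc: "almost_increasing (\<lambda>r. \<psi> r / r powr \<alpha>)"
    and dec: "almost_decreasing (\<lambda>r. \<psi> r / r powr \<beta>)"
  shows "\<alpha> \<le> \<beta>"
proof (rule ccontr)
  assume "\<not> \<alpha> \<le> \<beta>"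
  obtain c where c: "0 < c" "\<And>r. 0 < r \<Longrightarrow> r \<le> 1 \<Longrightarrow> c * (\<psi> r / r powr \<alpha>) \<le> \<psi> 1"
    using inc unfolding almost_increasing_def by force
  obtain C where C: "1 \<le> C" "\<And>r. 0 < r \<Longrightarrow> r \<le> 1 \<Longrightarrow> \<psi> 1 \<le> C * (\<psi> r / r powr \<beta>)"
    using dec unfolding almost_decreasing_def by force
  have "((\<lambda>r. r powr (\<alpha> - \<beta>)) \<longlongrightarrow> 0) (at_right 0)"
    using \<open>\<not> \<alpha> \<le> \<beta>\<close>
    by (intro tendsto_zero_powrI tendsto_ident_at tendsto_const)
      (auto simp: eventually_at_right_less eventually_at_filter)
  then have "\<forall>\<^sub>F r in at_right 0. r powr (\<alpha> - \<beta>) < c / C"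
    using c C by (intro order_tendstoD(2)) auto
  moreover have "\<forall>\<^sub>F r in at_right 0. 0 < r \<and> r < (1::real)"
    unfolding eventually_at_right_field by (intro exI[of _ 1]) auto
  ultimately have "\<forall>\<^sub>F r in at_right 0. 0 < r \<and> r < 1 \<and> r powr (\<alpha> - \<beta>) < c / C"
    by eventually_elim auto
  then obtain r :: real where r: "0 < r" "r < 1" "r powr (\<alpha> - \<beta>) < c / C"
    using eventually_happens'[OF trivial_limit_at_right_real] by blast
  have upper: "\<psi> 1 * r powr \<beta> \<le> C * \<psi> r"
    using C(2)[of r] r by (simp add: pos_le_divide_eq)
  have lower: "c * \<psi> r \<le> \<psi> 1 * r powr \<alpha>"
    using c(2)[of r] r by (simp add: pos_divide_le_eq mult.commute)
  have "c * (\<psi> 1 * r powr \<beta>) \<le> C * (c * \<psi> r)"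
    using upper c by (simp add: mult_left_mono mult.left_commute)
  also have "\<dots> \<le> C * (\<psi> 1 * r powr \<alpha>)"
    using lower C by simp
  also have "\<dots> = (C * (\<psi> 1 * r powr \<beta>)) * r powr (\<alpha> - \<beta>)"
    by (simp add: powr_add[symmetric])
  also have "\<dots> < (C * (\<psi> 1 * r powr \<beta>)) * (c / C)"
    using r C psi1 by (intro mult_strict_left_mono) auto
  also have "\<dots> = c * (\<psi> 1 * r powr \<beta>)"
    using C by simp
  finally show False by simp
qed

lemma m_idx_le_M_idx:
  assumes "0 < \<psi> 1"
  shows "m_idx \<psi> \<le> M_idx \<psi>"
  unfolding m_idx_def M_idx_def
  using almost_increasing_almost_decreasing_exponent_le[of \<psi>, OF assms]
  by (intro Sup_least Inf_greatest) auto

lemma powr_le_psi_of_M_idx_less: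
  assumes psi1: "0 < \<psi> 1" and "M_idx \<psi> < ereal \<beta>"
  shows "\<exists>K>0. \<forall>r. 0 < r \<and> r \<le> 1 \<longrightarrow> r powr \<beta> \<le> K * \<psi> r"
proof -
  obtain \<alpha> where "almost_decreasing (\<lambda>r. \<psi> r / r powr \<alpha>)" "\<alpha> < \<beta>"
    using assms(2) unfolding M_idx_def Inf_less_iff by auto
  then obtain C where C: "1 \<le> C" "\<And>r. 0 < r \<Longrightarrow> r \<le> 1 \<Longrightarrow> \<psi> 1 \<le> C * (\<psi> r / r powr \<alpha>)"
    unfolding almost_decreasing_def by force
  have "r powr \<beta> \<le> C / \<psi> 1 * \<psi> r" if r: "0 < r" "r \<le> 1" for r
  proof -
    have "r powr \<beta> \<le> r powr \<alpha>"
      using r \<open>\<alpha> < \<beta>\<close> by (intro powr_mono') auto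
    also have "\<dots> \<le> C / \<psi> 1 * \<psi> r"
      using C(2)[OF r] r psi1 by (simp add: field_simps)
    finally show ?thesis .
  qed
  moreover have "0 < C / \<psi> 1" using C psi1 by simp
  ultimately show ?thesis by blast
qed

lemma dpar_mult_Cpsi:
  assumes "f \<in> Cpsi \<psi> k" "g \<in> Cpsi \<psi> k" "bs \<in> dirs j" "j \<le> k"
  shows "dpar bs (\<lambda>x. f x * g x) = (\<lambda>x. \<Sum>(p, q)\<leftarrow>leibniz_splits bs. dpar p f x * dpar q g x)"
  using assms by (intro dpar_mult[where n = k]) (auto simp: Cpsi_def dirs_def)

lemma abs_dpar_diff_le_lower_order:
  fixes f :: "'a::euclidean_space \<Rightarrow> real"
  assumes pos: "\<forall>r. 0 < r \<and> r \<le> 1 \<longrightarrow> 0 < \<psi> r"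
    and f: "f \<in> Cpsi \<psi> k" and p: "p \<in> dirs j" "j < k"
  shows "\<bar>dpar p f (x + h) - dpar p f x\<bar> \<le> DIM('a) * norm_Cpsi \<psi> k f * norm h"
proof (rule abs_diff_le_of_partial_deriv_bound)
  fix y and b :: 'a assume b: "b \<in> Basis"
  show "(\<lambda>t. dpar p f (y + t *\<^sub>R b)) differentiable (at 0)"
    using f p b unfolding Cpsi_def by blast
  have "b # p \<in> dirs (Suc j)" using p b unfolding dirs_def by auto
  then show "\<bar>deriv (\<lambda>t. dpar p f (y + t *\<^sub>R b)) 0\<bar> \<le> norm_Cpsi \<psi> k f"
    using abs_dpar_le_norm_Cpsi[OF pos f, of "b # p" "Suc j" y] p by simp
qed

lemma le_mult_psi_weight:
  assumes r: "0 < r" "r \<le> 1" and "r powr (real k + 1) \<le> K * \<psi> r"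
  shows "r \<le> K * (\<psi> r * r powr - real k)"
proof -
  have "r = r powr (real k + 1) * r powr - real k"
    using r by (simp add: powr_add[symmetric])
  also have "\<dots> \<le> K * \<psi> r * r powr - real k"
    using assms(3) by (rule mult_right_mono) simp
  finally show ?thesis by (simp add: mult.assoc)
qed

lemma abs_dpar_diff_le_norm_Cpsi:
  fixes f :: "'a::euclidean_space \<Rightarrow> real" and K :: real
  assumes pos: "\<forall>r. 0 < r \<and> r \<le> 1 \<longrightarrow> 0 < \<psi> r"
    and K: "\<And>r. 0 < r \<Longrightarrow> r \<le> 1 \<Longrightarrow> r powr (real k + 1) \<le> K * \<psi> r" "0 \<le> K"
    and f: "f \<in> Cpsi \<psi> k" and p: "p \<in> dirs j" "j \<le> k"
    and h: "0 < norm h" "norm h \<le> 1"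
  shows "\<bar>dpar p f (x + h) - dpar p f x\<bar>
           \<le> (1 + DIM('a) * K) * norm_Cpsi \<psi> k f * (\<psi> (norm h) * norm h powr - real k)"
proof -
  let ?N = "norm_Cpsi \<psi> k f" and ?Q = "\<psi> (norm h) * norm h powr - real k"
  have Q_pos: "0 < ?Q" using pos h by simp
  have NQ_nonneg: "0 \<le> ?N * ?Q" using norm_Cpsi_nonneg[OF pos f] Q_pos by simp
  have "\<bar>dpar p f (x + h) - dpar p f x\<bar> \<le> ?N * ?Q + DIM('a) * K * (?N * ?Q)"
  proof (cases "j = k")
    case True
    then have "\<bar>dpar p f (x + h) - dpar p f x\<bar> / ?Q \<le> seminorm_psi \<psi> k (dpar p f)"
      using p h by (intro hol_quot_le_seminorm_psi[OF f]) (auto simp: hol_quot_def)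
    also have "\<dots> \<le> ?N"
      using True p seminorm_psi_le_norm_Cpsi[OF pos f] by simp
    finally have "\<bar>dpar p f (x + h) - dpar p f x\<bar> \<le> ?N * ?Q"
      using Q_pos by (simp add: pos_divide_le_eq)
    moreover have "0 \<le> DIM('a) * K * (?N * ?Q)"
      using K(2) NQ_nonneg by simp
    ultimately show ?thesis by linarith
  next
    case False
    with p have "j < k" by simp
    have "\<bar>dpar p f (x + h) - dpar p f x\<bar> \<le> DIM('a) * ?N * norm h"
      using abs_dpar_diff_le_lower_order[OF pos f p(1) \<open>j < k\<close>] .
    also have "\<dots> \<le> DIM('a) * ?N * (K * ?Q)"
      using le_mult_psi_weight[of _ k K \<psi>, OF h K(1)[OF h]] norm_Cpsi_nonneg[OF pos f]
      by (intro mult_left_mono) auto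
    also have "\<dots> = DIM('a) * K * (?N * ?Q)"
      by (simp add: algebra_simps)
    finally show ?thesis using NQ_nonneg by linarith
  qed
  then show ?thesis by (simp add: algebra_simps)
qed

lemma abs_dpar_mult_le:
  assumes pos: "\<forall>r. 0 < r \<and> r \<le> 1 \<longrightarrow> 0 < \<psi> r"
    and f: "f \<in> Cpsi \<psi> k" and g: "g \<in> Cpsi \<psi> k" and bs: "bs \<in> dirs j" and j: "j \<le> k"
  shows "\<bar>dpar bs (\<lambda>x. f x * g x) x\<bar> \<le> 2 ^ j * (norm_Cpsi \<psi> k f * norm_Cpsi \<psi> k g)"
proof -
  have "\<bar>dpar bs (\<lambda>x. f x * g x) x\<bar> = \<bar>\<Sum>(p, q)\<leftarrow>leibniz_splits bs. dpar p f x * dpar q g x\<bar>"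
    using dpar_mult_Cpsi[OF f g bs j] by simp
  also have "\<dots> \<le> real (length (leibniz_splits bs)) * (norm_Cpsi \<psi> k f * norm_Cpsi \<psi> k g)"
  proof (rule abs_sum_list_le_length_mult)
    fix z assume "z \<in> set (leibniz_splits bs)"
    then obtain p q where z: "z = (p, q)" "(p, q) \<in> set (leibniz_splits bs)" by (metis surj_pair)
    note pq = leibniz_splits_dirs[OF z(2) bs]
    have "\<bar>dpar p f x\<bar> \<le> norm_Cpsi \<psi> k f" "\<bar>dpar q g x\<bar> \<le> norm_Cpsi \<psi> k g"
      using abs_dpar_le_norm_Cpsi[OF pos f pq(1)] abs_dpar_le_norm_Cpsi[OF pos g pq(2)] pq(3,4) j
      by auto
    then show "\<bar>case z of (p, q) \<Rightarrow> dpar p f x * dpar q g x\<bar> \<le> norm_Cpsi \<psi> k f * norm_Cpsi \<psi> k g"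
      unfolding z by (simp add: abs_mult mult_mono norm_Cpsi_nonneg[OF pos f])
  qed
  also have "length (leibniz_splits bs) = 2 ^ j"
    using bs by (simp add: length_leibniz_splits dirs_def)
  finally show ?thesis by simp
qed

lemma abs_dpar_mult_diff_le:
  fixes f g :: "'a::euclidean_space \<Rightarrow> real" and K :: real
  assumes pos: "\<forall>r. 0 < r \<and> r \<le> 1 \<longrightarrow> 0 < \<psi> r"
    and K: "\<And>r. 0 < r \<Longrightarrow> r \<le> 1 \<Longrightarrow> r powr (real k + 1) \<le> K * \<psi> r" "0 \<le> K"
    and f: "f \<in> Cpsi \<psi> k" and g: "g \<in> Cpsi \<psi> k" and bs: "bs \<in> dirs k"
    and h: "0 < norm h" "norm h \<le> 1"
  shows "\<bar>dpar bs (\<lambda>x. f x * g x) (x + h) - dpar bs (\<lambda>x. f x * g x) x\<bar>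
           \<le> 2 ^ k * (2 * (1 + DIM('a) * K)) * (norm_Cpsi \<psi> k f * norm_Cpsi \<psi> k g)
               * (\<psi> (norm h) * norm h powr - real k)"
proof -
  let ?A = "1 + DIM('a) * K" and ?Q = "\<psi> (norm h) * norm h powr - real k"
  let ?Nf = "norm_Cpsi \<psi> k f" and ?Ng = "norm_Cpsi \<psi> k g"
  have "\<bar>dpar bs (\<lambda>x. f x * g x) (x + h) - dpar bs (\<lambda>x. f x * g x) x\<bar>
      = \<bar>\<Sum>(p, q)\<leftarrow>leibniz_splits bs. dpar p f (x + h) * dpar q g (x + h) - dpar p f x * dpar q g x\<bar>"
    using dpar_mult_Cpsi[OF f g bs order.refl] by (simp add: sum_list_subtractf[symmetric] split_def)
  also have "\<dots> \<le> real (length (leibniz_splits bs)) * (2 * ?A * (?Nf * ?Ng) * ?Q)"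
  proof (rule abs_sum_list_le_length_mult)
    fix z assume "z \<in> set (leibniz_splits bs)"
    then obtain p q where z: "z = (p, q)" "(p, q) \<in> set (leibniz_splits bs)" by (metis surj_pair)
    note pq = leibniz_splits_dirs[OF z(2) bs]
    have "\<bar>dpar p f (x + h) * dpar q g (x + h) - dpar p f x * dpar q g x\<bar>
        \<le> (?A * ?Nf * ?Q) * ?Ng + ?Nf * (?A * ?Ng * ?Q)"
      using abs_dpar_diff_le_norm_Cpsi[OF pos K f pq(1) pq(3) h]
        abs_dpar_diff_le_norm_Cpsi[OF pos K g pq(2) pq(4) h]
        abs_dpar_le_norm_Cpsi[OF pos g pq(2) pq(4)] abs_dpar_le_norm_Cpsi[OF pos f pq(1) pq(3)]
      by (intro abs_mult_diff_le)
    then show "\<bar>case z of (p, q) \<Rightarrow> dpar p f (x + h) * dpar q g (x + h) - dpar p f x * dpar q g x\<bar>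
        \<le> 2 * ?A * (?Nf * ?Ng) * ?Q"
      unfolding z by (simp add: algebra_simps)
  qed
  also have "length (leibniz_splits bs) = 2 ^ k"
    using bs by (simp add: length_leibniz_splits dirs_def)
  finally show ?thesis by (simp add: algebra_simps)
qed

lemma C0norm_j_mult_le:
  assumes "\<forall>r. 0 < r \<and> r \<le> 1 \<longrightarrow> 0 < \<psi> r" "f \<in> Cpsi \<psi> k" "g \<in> Cpsi \<psi> k" "j \<le> k"
  shows "C0norm_j j (\<lambda>x. f x * g x :: real) \<le> 2 ^ j * (norm_Cpsi \<psi> k f * norm_Cpsi \<psi> k g)"
  unfolding C0norm_j_def
proof (rule cSup_least)
  show "{\<bar>dpar bs (\<lambda>x. f x * g x) x\<bar> | bs x. bs \<in> dirs j} \<noteq> {}"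
    using dirs_nonempty by blast
qed (use abs_dpar_mult_le[OF assms(1-3) _ assms(4)] in blast)

lemma seminorm_psi_mult_le:
  fixes f g :: "'a::euclidean_space \<Rightarrow> real" and K :: real
  assumes pos: "\<forall>r. 0 < r \<and> r \<le> 1 \<longrightarrow> 0 < \<psi> r"
    and K: "\<And>r. 0 < r \<Longrightarrow> r \<le> 1 \<Longrightarrow> r powr (real k + 1) \<le> K * \<psi> r" "0 \<le> K"
    and f: "f \<in> Cpsi \<psi> k" and g: "g \<in> Cpsi \<psi> k" and bs: "bs \<in> dirs k"
  shows "seminorm_psi \<psi> k (dpar bs (\<lambda>x. f x * g x))
           \<le> 2 ^ k * (2 * (1 + DIM('a) * K)) * (norm_Cpsi \<psi> k f * norm_Cpsi \<psi> k g)"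
  unfolding seminorm_psi_def
proof (rule cSup_least)
  fix y assume "y \<in> hol_quot \<psi> k (dpar bs (\<lambda>x. f x * g x))"
  then obtain x h where y: "y = \<bar>dpar bs (\<lambda>x. f x * g x) (x + h) - dpar bs (\<lambda>x. f x * g x) x\<bar>
      / (\<psi> (norm h) * norm h powr - real k)" and h: "0 < norm h" "norm h \<le> 1"
    unfolding hol_quot_def by blast
  show "y \<le> 2 ^ k * (2 * (1 + DIM('a) * K)) * (norm_Cpsi \<psi> k f * norm_Cpsi \<psi> k g)"
    unfolding y using abs_dpar_mult_diff_le[OF pos K f g bs h, of x] pos h
    by (simp add: pos_divide_le_eq)
qed (rule hol_quot_nonempty)

lemma norm_Cpsi_mult_le:
  fixes f g :: "'a::euclidean_space \<Rightarrow> real" and K :: real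
  assumes pos: "\<forall>r. 0 < r \<and> r \<le> 1 \<longrightarrow> 0 < \<psi> r"
    and K: "\<And>r. 0 < r \<Longrightarrow> r \<le> 1 \<Longrightarrow> r powr (real k + 1) \<le> K * \<psi> r" "0 \<le> K"
    and f: "f \<in> Cpsi \<psi> k" and g: "g \<in> Cpsi \<psi> k"
  shows "norm_Cpsi \<psi> k (\<lambda>x. f x * g x)
           \<le> (real (k + 1) * 2 ^ k + 2 ^ k * (2 * (1 + DIM('a) * K)))
               * norm_Cpsi \<psi> k f * norm_Cpsi \<psi> k g"
proof -
  let ?N = "norm_Cpsi \<psi> k f * norm_Cpsi \<psi> k g"
  have "(\<Sum>j\<le>k. C0norm_j j (\<lambda>x. f x * g x)) \<le> (\<Sum>j\<le>k. 2 ^ k * ?N)"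
  proof (rule sum_mono)
    fix j assume "j \<in> {..k}"
    then have "C0norm_j j (\<lambda>x. f x * g x) \<le> 2 ^ j * ?N" "(2::real) ^ j \<le> 2 ^ k"
      using C0norm_j_mult_le[OF pos f g] by auto
    then show "C0norm_j j (\<lambda>x. f x * g x) \<le> 2 ^ k * ?N"
      using norm_Cpsi_nonneg[OF pos f] norm_Cpsi_nonneg[OF pos g]
      by (meson mult_right_mono order_trans zero_le_mult_iff)
  qed
  moreover have "Max ((\<lambda>bs. seminorm_psi \<psi> k (dpar bs (\<lambda>x. f x * g x))) ` (dirs k :: 'a list set))
      \<le> 2 ^ k * (2 * (1 + DIM('a) * K)) * ?N"
    using finite_dirs dirs_nonempty seminorm_psi_mult_le[OF pos K f g] by (intro Max.boundedI) auto
  ultimately show ?thesis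
    unfolding norm_Cpsi_def by (simp add: algebra_simps)
qed

theorem lemma2p7:
  fixes \<psi> :: "real \<Rightarrow> real" and k :: nat
  assumes "\<forall>r. 0 < r \<and> r \<le> 1 \<longrightarrow> 0 < \<psi> r"
    and "\<psi> 1 = 1"
    and "(\<psi> \<longlongrightarrow> 0) (at_right 0)"
    and "0 < k"
    and "I_idx \<psi> \<subseteq> {ereal (real k) <..< ereal (real k + 1)}"
  shows "\<exists>c1>0. \<forall>f g :: 'a::euclidean_space \<Rightarrow> real.
           f \<in> Cpsi \<psi> k \<longrightarrow> g \<in> Cpsi \<psi> k \<longrightarrow>
           norm_Cpsi \<psi> k (\<lambda>x. f x * g x) \<le> c1 * norm_Cpsi \<psi> k f * norm_Cpsi \<psi> k g"
proof -
  have "M_idx \<psi> \<in> I_idx \<psi>"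
    using m_idx_le_M_idx[of \<psi>] assms(2) unfolding I_idx_def by simp
  then have "M_idx \<psi> < ereal (real k + 1)"
    using assms(5) by auto
  then obtain K where K: "0 < K" "\<And>r. 0 < r \<Longrightarrow> r \<le> 1 \<Longrightarrow> r powr (real k + 1) \<le> K * \<psi> r"
    using powr_le_psi_of_M_idx_less[of \<psi> "real k + 1"] assms(2) by auto
  show ?thesis
    using norm_Cpsi_mult_le[OF assms(1) K(2) less_imp_le[OF K(1)]] K(1)
    by (intro exI[of _ "real (k + 1) * 2 ^ k + 2 ^ k * (2 * (1 + DIM('a) * K))"])
      (auto intro: add_pos_nonneg)
qed

end
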